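(* Let $d,s,n$ be positive integers, $f_0^*:\{\pm1\}^s\to\mathbb R$, $S^*\subset[d]$ with $|S^*|=s$, $f^*(\mathbf x)=f_0^*(\mathbf x_{S^*})$, and let $\mathcal D_n=\{(\mathbf X_i,Y_i)\}_{i=1}^n$ with $\mathbf X_i$ i.i.d. uniform on $\{\pm1\}^d$, $Y_i=f^*(\mathbf X_i)+\varepsilon_i$, $\varepsilon_i$ i.i.d. zero-mean independent of the covariates, and assume $|Y|\le M$ almost surely. Let $\hat f(\cdot;\mathcal D_n,\Theta)=\frac1B\sum_{b=1}^B\tilde f(\cdot;\mathcal D_n,\theta_b)$ be a regression tree ensemble model in which each tree $\tilde f$ is fit with a regression tree algorithm $\mathcal A$ and $\Theta=(\theta_1,\dots,\theta_B)$ has i.i.d. entries independent of the data. Then $\mathfrak R(\hat f,f_0^*,d,n)\ge(1-\kappa\delta)\operatorname{Var}\{f_0^*(\mathbf X)\}$, where $\delta=\max_{\mathbf x}\mathbb P\{J(\mathbf x;\mathcal D_n,\theta_1)\cap S^*\ne\emptyset\}$ and $\kappa=2M/\operatorname{Var}\{f_0^*(\mathbf X)\}^{1/2}$.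
   Context: A cell is a subcube $C=\{\mathbf x:x_j=z_j,\ j\in J(C)\}$, split on $k\notin J(C)$ into $C\cap\{x_k=\pm1\}$. A regression tree model is constant on each leaf of a binary tree obtained by recursively splitting cells starting from $\{\pm1\}^d$; as standing convention each leaf is labeled with the mean response of the (possibly resampled) observations in it. A regression tree algorithm maps data and a random seed to such a model. For a tree, $J(\mathbf x;\mathcal D_n,\theta)$ is the set of split covariates along the root-to-leaf path containing $\mathbf x$. $R(g,f^* )=\mathbb E_{\mathbf X}\{(g(\mathbf X)-f^*(\mathbf X))^2\}$ with $\mathbf X$ uniform; $\mathfrak R(\hat f,f_0^*,d,n)=\mathbb E_{\mathcal D_n,\Theta}R(\hat f(\cdot;\mathcal D_n,\Theta),f^* )$. *)

theory Defs
  imports "HOL-Probability.Probability" "HOL-Library.Multiset"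
begin

text \<open>Points of the hypercube {+-1}^d are encoded as boolean lists of length d
  (True = +1, False = -1); coordinates are indexed 0..d-1.\<close>

definition cube :: "nat \<Rightarrow> bool list set" where
  "cube d = {xs. length xs = d}"

definition restr :: "bool list \<Rightarrow> nat set \<Rightarrow> bool list" where
  "restr x S = map (\<lambda>j. x ! j) (sorted_list_of_set S)"

text \<open>Split structure of a regression tree: Node k l r splits the current cell on
  coordinate k; l is the child x_k = -1 (False), r the child x_k = +1 (True).\<close>
datatype stree = Leaf | Node nat stree stree

fun valid_tree_aux :: "nat \<Rightarrow> nat set \<Rightarrow> stree \<Rightarrow> bool" where
  "valid_tree_aux d J Leaf = True"
| "valid_tree_aux d J (Node k l r) =
     (k < d \<and> k \<notin> J \<and> valid_tree_aux d (insert k J) l \<and> valid_tree_aux d (insert k J) r)"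

definition valid_tree :: "nat \<Rightarrow> stree \<Rightarrow> bool" where
  "valid_tree d t = valid_tree_aux d {} t"

text \<open>Root-to-leaf path of x (identifies the leaf containing x).\<close>
fun leaf_path :: "stree \<Rightarrow> bool list \<Rightarrow> bool list" where
  "leaf_path Leaf x = []"
| "leaf_path (Node k l r) x = (x ! k) # leaf_path (if x ! k then r else l) x"

fun path_splits :: "stree \<Rightarrow> bool list \<Rightarrow> nat set" where
  "path_splits Leaf x = {}"
| "path_splits (Node k l r) x = insert k (path_splits (if x ! k then r else l) x)"

text \<open>Tree model: split structure t plus the multiset W of (resampled) observation indices;
  each leaf is labelled with the mean response of the resampled observations in it
  (0 if the leaf contains none).  Data D i = (X_i, Y_i) for i < n.\<close>
definition tree_pred :: "nat \<Rightarrow> (nat \<Rightarrow> bool list \<times> real) \<Rightarrow> stree \<times> nat multiset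
                          \<Rightarrow> bool list \<Rightarrow> real" where
  "tree_pred n D tw x =
     (let t = fst tw; W = snd tw;
          I = {i \<in> {..<n}. leaf_path t (fst (D i)) = leaf_path t x}
      in (\<Sum>i\<in>I. real (count W i) * snd (D i)) / (\<Sum>i\<in>I. real (count W i)))"

definition ensemble :: "nat \<Rightarrow> nat \<Rightarrow> ((nat \<Rightarrow> bool list \<times> real) \<Rightarrow> 'c \<Rightarrow> stree \<times> nat multiset)
                        \<Rightarrow> (nat \<Rightarrow> bool list \<times> real) \<Rightarrow> (nat \<Rightarrow> 'c) \<Rightarrow> bool list \<Rightarrow> real" where
  "ensemble n B A D \<Theta> x = (\<Sum>b<B. tree_pred n D (A D (\<Theta> b)) x) / real B"

definition obs_law :: "nat \<Rightarrow> (bool list \<Rightarrow> real) \<Rightarrow> real measure \<Rightarrow> (bool list \<times> real) measure" where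
  "obs_law d fstar \<mu> =
     distr (measure_pmf (pmf_of_set (cube d)) \<Otimes>\<^sub>M \<mu>) (count_space UNIV \<Otimes>\<^sub>M borel)
           (\<lambda>(x, e). (x, fstar x + e))"

definition data_law :: "nat \<Rightarrow> nat \<Rightarrow> (bool list \<Rightarrow> real) \<Rightarrow> real measure
                        \<Rightarrow> (nat \<Rightarrow> bool list \<times> real) measure" where
  "data_law n d fstar \<mu> = (\<Pi>\<^sub>M i\<in>{..<n}. obs_law d fstar \<mu>)"

definition seed_law :: "nat \<Rightarrow> 'c measure \<Rightarrow> (nat \<Rightarrow> 'c) measure" where
  "seed_law B \<nu> = (\<Pi>\<^sub>M b\<in>{..<B}. \<nu>)"

definition risk :: "nat \<Rightarrow> (bool list \<Rightarrow> real) \<Rightarrow> (bool list \<Rightarrow> real) \<Rightarrow> real" where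
  "risk d g fstar = measure_pmf.expectation (pmf_of_set (cube d)) (\<lambda>x. (g x - fstar x)\<^sup>2)"

end

theory Submission
  imports Defs
begin

text \<open>Write v(x) = f0(x_S) - E f0 for the centred signal. Expanding the square gives
  R(f, f*) >= Var f0 - 2 E_x[f(x) v(x)] for every predictor f. If the root-to-leaf path of x in a tree
  avoids S, the tree is constant on the fibre of points agreeing with x outside S, and its path avoids S
  on the whole fibre. As the coordinates in S are uniform and independent of the others, that part of
  the tree is uncorrelated with v, so tree b contributes at most M E_x[1{J_b(x) meets S} |v(x)|].
  In expectation over data and seeds each tree is distributed as a tree fitted with a single seed, so
  every indicator has probability at most delta, and E|v| <= (Var f0)^(1/2) by Cauchy-Schwarz.\<close>

section \<open>Averages over the hypercube\<close>

lemma nth_eq_beyond_length: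
  "length xs = length ys \<Longrightarrow> length xs \<le> j \<Longrightarrow> xs ! j = ys ! j"
  using nth_append[of xs "[]" j] nth_append[of ys "[]" j] by simp

lemma cube_eq_lists: "cube d = {xs. set xs \<subseteq> UNIV \<and> length xs = d}"
  unfolding cube_def by simp

lemma finite_cube [simp]: "finite (cube d)"
  unfolding cube_eq_lists by (rule finite_lists_length_eq) simp

lemma card_cube [simp]: "card (cube d) = 2 ^ d"
  unfolding cube_eq_lists by (subst card_lists_length_eq) simp_all

lemma cube_nonempty [simp]: "cube d \<noteq> {}"
  using card_cube[of d] by (metis card.empty power_not_zero zero_neq_numeral)

definition cube_avg :: "nat \<Rightarrow> (bool list \<Rightarrow> real) \<Rightarrow> real" where
  "cube_avg d g = (\<Sum>x\<in>cube d. g x) / 2 ^ d"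

lemma expectation_pmf_of_cube: "measure_pmf.expectation (pmf_of_set (cube d)) g = cube_avg d g"
  by (simp add: integral_pmf_of_set cube_avg_def)

lemma risk_eq_cube_avg: "risk d g f = cube_avg d (\<lambda>x. (g x - f x)\<^sup>2)"
  unfolding risk_def expectation_pmf_of_cube ..

lemma cube_avg_const [simp]: "cube_avg d (\<lambda>_. c) = c"
  by (simp add: cube_avg_def)

lemma cube_avg_add: "cube_avg d (\<lambda>x. f x + g x) = cube_avg d f + cube_avg d g"
  by (simp add: cube_avg_def sum.distrib add_divide_distrib)

lemma cube_avg_diff: "cube_avg d (\<lambda>x. f x - g x) = cube_avg d f - cube_avg d g"
  by (simp add: cube_avg_def sum_subtractf diff_divide_distrib)

lemma cube_avg_mult_left: "cube_avg d (\<lambda>x. c * f x) = c * cube_avg d f"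
  by (simp add: cube_avg_def sum_distrib_left)

lemma cube_avg_divide: "cube_avg d (\<lambda>x. f x / c) = cube_avg d f / c"
  by (simp add: cube_avg_def sum_divide_distrib ac_simps)

lemma cube_avg_sum: "cube_avg d (\<lambda>x. \<Sum>b\<in>I. f b x) = (\<Sum>b\<in>I. cube_avg d (f b))"
  by (simp add: cube_avg_def sum.swap[of _ I] sum_divide_distrib)

lemma cube_avg_mono: "(\<And>x. x \<in> cube d \<Longrightarrow> f x \<le> g x) \<Longrightarrow> cube_avg d f \<le> cube_avg d g"
  unfolding cube_avg_def by (intro divide_right_mono sum_mono) simp_all

lemma cube_avg_abs_le_sqrt: "cube_avg d (\<lambda>x. \<bar>f x\<bar>) \<le> sqrt (cube_avg d (\<lambda>x. (f x)\<^sup>2))"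
proof (rule real_le_rsqrt)
  have "(\<Sum>x\<in>cube d. \<bar>f x\<bar>)\<^sup>2 \<le> (\<Sum>x\<in>cube d. (f x)\<^sup>2) * 2 ^ d"
    using sum_squared_le_sum_of_squares[of "\<lambda>x. \<bar>f x\<bar>" "cube d"] by simp
  then show "(cube_avg d (\<lambda>x. \<bar>f x\<bar>))\<^sup>2 \<le> cube_avg d (\<lambda>x. (f x)\<^sup>2)"
    by (simp add: cube_avg_def power_divide field_simps power2_eq_square)
qed

text \<open>Agreement is required at every index j, also j >= d, where nth is unspecified but coincides
  for lists of equal length; this way the path lemmas need no bound on the split indices.\<close>
definition fibre :: "nat \<Rightarrow> nat set \<Rightarrow> bool list \<Rightarrow> bool list set" where
  "fibre d S y = {x \<in> cube d. \<forall>j. j \<notin> S \<longrightarrow> x ! j = y ! j}"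

lemma fibre_sym: "x \<in> cube d \<Longrightarrow> y \<in> fibre d S x \<Longrightarrow> x \<in> fibre d S y"
  unfolding fibre_def by auto

lemma length_restr [simp]: "length (restr x S) = card S"
  by (simp add: restr_def)

lemma nth_restr: "k < card S \<Longrightarrow> restr x S ! k = x ! (sorted_list_of_set S ! k)"
  by (simp add: restr_def)

lemma inj_on_restr_fibre:
  assumes "finite S"
  shows "inj_on (\<lambda>x. restr x S) (fibre d S y)"
proof (rule inj_onI)
  fix x x' assume x: "x \<in> fibre d S y" and x': "x' \<in> fibre d S y" and eq: "restr x S = restr x' S"
  show "x = x'"
  proof (rule nth_equalityI)
    show "length x = length x'" using x x' by (simp add: fibre_def cube_def)
    fix j assume "j < length x"
    show "x ! j = x' ! j"
    proof (cases "j \<in> S")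
      case True
      then obtain k where "k < card S" "sorted_list_of_set S ! k = j"
        using assms by (metis in_set_conv_nth length_sorted_list_of_set set_sorted_list_of_set)
      then show ?thesis using eq nth_restr[of k S x] nth_restr[of k S x'] by simp
    next
      case False
      then show ?thesis using x x' by (simp add: fibre_def)
    qed
  qed
qed

lemma cube_subset_restr_fibre:
  assumes S: "S \<subseteq> {..<d}" and y: "y \<in> cube d"
  shows "cube (card S) \<subseteq> (\<lambda>x. restr x S) ` fibre d S y"
proof
  fix z assume z: "z \<in> cube (card S)"
  define L where "L = sorted_list_of_set S"
  define pos where "pos = inv_into {..<card S} (nth L)"
  define x where "x = map (\<lambda>j. if j \<in> S then z ! pos j else y ! j) [0..<d]"
  have "finite S" using S finite_subset by blast
  then have L: "distinct L" "length L = card S" "set L = S"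
    by (simp_all add: L_def)
  have "x ! j = y ! j" if "j \<notin> S" for j
    using that y nth_eq_beyond_length[of x y j] by (cases "j < d") (auto simp: x_def cube_def)
  then have "x \<in> fibre d S y" by (simp add: fibre_def cube_def x_def)
  moreover have "restr x S = z"
  proof (rule nth_equalityI)
    show "length (restr x S) = length z" using z by (simp add: cube_def)
    fix k assume "k < length (restr x S)"
    then have k: "k < card S" by simp
    then have "L ! k \<in> S" using L nth_mem by metis
    moreover have "pos (L ! k) = k"
      using L k by (simp add: pos_def inj_on_nth)
    ultimately show "restr x S ! k = z ! k"
      using S k by (auto simp: nth_restr x_def L_def)
  qed
  ultimately show "z \<in> (\<lambda>x. restr x S) ` fibre d S y" by blast
qed

lemma bij_betw_restr_fibre:
  assumes "S \<subseteq> {..<d}" and "y \<in> cube d"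
  shows "bij_betw (\<lambda>x. restr x S) (fibre d S y) (cube (card S))"
proof (rule bij_betw_imageI)
  show "inj_on (\<lambda>x. restr x S) (fibre d S y)"
    using assms(1) finite_subset by (intro inj_on_restr_fibre) auto
  show "(\<lambda>x. restr x S) ` fibre d S y = cube (card S)"
    using cube_subset_restr_fibre[OF assms] by (auto simp: cube_def)
qed

lemma cube_avg_mult_restr:
  assumes S: "S \<subseteq> {..<d}"
    and h: "\<And>x y. x \<in> cube d \<Longrightarrow> y \<in> fibre d S x \<Longrightarrow> h y = h x"
  shows "cube_avg d (\<lambda>x. h x * \<phi> (restr x S)) = cube_avg d h * cube_avg (card S) \<phi>"
proof -
  have fibre_sum: "(\<Sum>y\<in>fibre d S x. h y * \<phi> (restr y S)) = h x * (\<Sum>z\<in>cube (card S). \<phi> z)"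
    if x: "x \<in> cube d" for x
  proof -
    have "(\<Sum>y\<in>fibre d S x. h y * \<phi> (restr y S)) = h x * (\<Sum>y\<in>fibre d S x. \<phi> (restr y S))"
      using h[OF x] by (simp add: sum_distrib_left)
    also have "(\<Sum>y\<in>fibre d S x. \<phi> (restr y S)) = (\<Sum>z\<in>cube (card S). \<phi> z)"
      using sum.reindex_bij_betw[OF bij_betw_restr_fibre[OF S x]] .
    finally show ?thesis .
  qed
  have card_fibre: "card (fibre d S y) = 2 ^ card S" if "y \<in> cube d" for y
    using bij_betw_same_card[OF bij_betw_restr_fibre[OF S that]] by simp
  have "(\<Sum>x\<in>cube d. h x) * (\<Sum>z\<in>cube (card S). \<phi> z)
      = (\<Sum>x\<in>cube d. \<Sum>y\<in>fibre d S x. h y * \<phi> (restr y S))"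
    by (simp add: fibre_sum sum_distrib_right)
  also have "\<dots> = (\<Sum>y\<in>cube d. \<Sum>x\<in>{x \<in> cube d. y \<in> fibre d S x}. h y * \<phi> (restr y S))"
    using sum.swap_restrict[of "cube d" "cube d" "\<lambda>x y. h y * \<phi> (restr y S)" "\<lambda>x y. y \<in> fibre d S x"]
    by (simp add: fibre_def)
  also have "\<dots> = (\<Sum>y\<in>cube d. 2 ^ card S * (h y * \<phi> (restr y S)))"
  proof (rule sum.cong[OF refl])
    fix y assume y: "y \<in> cube d"
    have "{x \<in> cube d. y \<in> fibre d S x} = fibre d S y"
      using fibre_sym y by (auto simp: fibre_def)
    then show "(\<Sum>x\<in>{x \<in> cube d. y \<in> fibre d S x}. h y * \<phi> (restr y S))
        = 2 ^ card S * (h y * \<phi> (restr y S))"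
      using card_fibre[OF y] by simp
  qed
  also have "\<dots> = 2 ^ card S * (\<Sum>x\<in>cube d. h x * \<phi> (restr x S))"
    by (simp add: sum_distrib_left)
  finally show ?thesis
    by (simp add: cube_avg_def field_simps)
qed

lemma cube_avg_restr: "S \<subseteq> {..<d} \<Longrightarrow> cube_avg d (\<lambda>x. \<phi> (restr x S)) = cube_avg (card S) \<phi>"
  using cube_avg_mult_restr[of S d "\<lambda>_. 1" \<phi>] by simp

definition cube_var :: "nat \<Rightarrow> (bool list \<Rightarrow> real) \<Rightarrow> real" where
  "cube_var d f = cube_avg d (\<lambda>x. (f x - cube_avg d f)\<^sup>2)"

lemma variance_pmf_of_cube: "measure_pmf.variance (pmf_of_set (cube d)) f = cube_var d f"
  unfolding cube_var_def expectation_pmf_of_cube ..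

lemma cube_var_nonneg: "cube_var d f \<ge> 0"
  unfolding cube_var_def using cube_avg_mono[of d "\<lambda>_. 0"] by simp

lemma cube_avg_abs_centred_restr_le:
  assumes "S \<subseteq> {..<d}"
  shows "cube_avg d (\<lambda>x. \<bar>f (restr x S) - cube_avg (card S) f\<bar>) \<le> sqrt (cube_var (card S) f)"
  using cube_avg_abs_le_sqrt[of d "\<lambda>x. f (restr x S) - cube_avg (card S) f"]
    cube_avg_restr[OF assms, of "\<lambda>z. (f z - cube_avg (card S) f)\<^sup>2"]
  by (simp add: cube_var_def)

section \<open>Trees and the deterministic bound\<close>

lemma leaf_path_path_splits_eq:
  assumes "\<forall>j. j \<notin> S \<longrightarrow> y ! j = x ! j" and "path_splits t x \<inter> S = {}"
  shows "leaf_path t y = leaf_path t x \<and> path_splits t y = path_splits t x"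
  using assms(2) by (induction t) (use assms(1) in auto)

lemma abs_weighted_mean_le:
  fixes w a :: "'i \<Rightarrow> real"
  assumes w: "\<And>i. i \<in> I \<Longrightarrow> w i \<ge> 0" and a: "\<And>i. i \<in> I \<Longrightarrow> \<bar>a i\<bar> \<le> M" and M: "M \<ge> 0"
  shows "\<bar>(\<Sum>i\<in>I. w i * a i) / (\<Sum>i\<in>I. w i)\<bar> \<le> M"
proof (cases "(\<Sum>i\<in>I. w i) = 0")
  case True
  then show ?thesis using M by simp
next
  case False
  then have pos: "(\<Sum>i\<in>I. w i) > 0" using sum_nonneg[of I w] w by fastforce
  have "\<bar>\<Sum>i\<in>I. w i * a i\<bar> \<le> (\<Sum>i\<in>I. w i * \<bar>a i\<bar>)"
    using sum_abs[of "\<lambda>i. w i * a i" I] w by (simp add: abs_mult)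
  also have "\<dots> \<le> (\<Sum>i\<in>I. w i * M)"
    using w a by (intro sum_mono mult_left_mono) auto
  also have "\<dots> = M * (\<Sum>i\<in>I. w i)"
    by (simp add: sum_distrib_left mult.commute)
  finally show ?thesis
    using pos by (simp add: abs_divide pos_divide_le_eq)
qed

lemma abs_tree_pred_le: "M \<ge> 0 \<Longrightarrow> \<forall>i<n. \<bar>snd (D i)\<bar> \<le> M \<Longrightarrow> \<bar>tree_pred n D tw x\<bar> \<le> M"
  unfolding tree_pred_def Let_def by (rule abs_weighted_mean_le) auto

lemma abs_ensemble_le: "M \<ge> 0 \<Longrightarrow> \<forall>i<n. \<bar>snd (D i)\<bar> \<le> M \<Longrightarrow> \<bar>ensemble n B A D \<Theta> x\<bar> \<le> M"
  using abs_weighted_mean_le[of "{..<B}" "\<lambda>_. 1" "\<lambda>b. tree_pred n D (A D (\<Theta> b)) x" M]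
  by (simp add: ensemble_def abs_tree_pred_le)

lemma abs_risk_le:
  assumes "\<And>x. \<bar>g x\<bar> \<le> M"
  shows "\<bar>risk d g f\<bar> \<le> cube_avg d (\<lambda>x. (M + \<bar>f x\<bar>)\<^sup>2)"
proof -
  have "0 \<le> risk d g f"
    unfolding risk_eq_cube_avg using cube_avg_mono[of d "\<lambda>_. 0"] by simp
  moreover have "(g x - f x)\<^sup>2 \<le> (M + \<bar>f x\<bar>)\<^sup>2" for x
    using assms[of x] by (intro power2_le_iff_abs_le[THEN iffD2]) auto
  ultimately show ?thesis
    unfolding risk_eq_cube_avg by (simp add: cube_avg_mono)
qed

lemma cube_avg_mult_centred_le:
  assumes S: "S \<subseteq> {..<d}" and centred: "cube_avg (card S) \<phi> = 0"
    and T: "\<And>x. x \<in> cube d \<Longrightarrow> \<bar>T x\<bar> \<le> M"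
    and inv: "\<And>x y. x \<in> cube d \<Longrightarrow> y \<in> fibre d S x \<Longrightarrow> \<not> E x \<Longrightarrow> \<not> E y \<and> T y = T x"
  shows "cube_avg d (\<lambda>x. T x * \<phi> (restr x S)) \<le> M * cube_avg d (\<lambda>x. of_bool (E x) * \<bar>\<phi> (restr x S)\<bar>)"
proof -
  define h where "h x = (if E x then 0 else T x)" for x
  have "h y = h x" if x: "x \<in> cube d" and y: "y \<in> fibre d S x" for x y
  proof (cases "E x")
    case True
    have "y \<in> cube d" "x \<in> fibre d S y" using x y fibre_sym by (auto simp: fibre_def)
    then have "E y" using inv[of y x] True by blast
    then show ?thesis using True by (simp add: h_def)
  next
    case False
    then show ?thesis using inv[OF x y] by (simp add: h_def)
  qed
  then have uncorrelated: "cube_avg d (\<lambda>x. h x * \<phi> (restr x S)) = 0"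
    using cube_avg_mult_restr[OF S] centred by simp
  have "T x * \<phi> (restr x S) \<le> h x * \<phi> (restr x S) + M * (of_bool (E x) * \<bar>\<phi> (restr x S)\<bar>)"
    if x: "x \<in> cube d" for x
  proof (cases "E x")
    case True
    have "T x * \<phi> (restr x S) \<le> \<bar>T x\<bar> * \<bar>\<phi> (restr x S)\<bar>"
      by (metis abs_ge_self abs_mult)
    also have "\<dots> \<le> M * \<bar>\<phi> (restr x S)\<bar>"
      using T[OF x] by (rule mult_right_mono) simp
    finally show ?thesis using True by (simp add: h_def)
  next
    case False
    then show ?thesis by (simp add: h_def)
  qed
  then have "cube_avg d (\<lambda>x. T x * \<phi> (restr x S))
      \<le> cube_avg d (\<lambda>x. h x * \<phi> (restr x S) + M * (of_bool (E x) * \<bar>\<phi> (restr x S)\<bar>))"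
    by (rule cube_avg_mono)
  also have "\<dots> = M * cube_avg d (\<lambda>x. of_bool (E x) * \<bar>\<phi> (restr x S)\<bar>)"
    using uncorrelated by (simp add: cube_avg_add cube_avg_mult_left)
  finally show ?thesis .
qed

lemma cube_avg_sq_diff_restr_ge:
  fixes f g :: "bool list \<Rightarrow> real"
  assumes S: "S \<subseteq> {..<d}"
  defines "m \<equiv> cube_avg (card S) f"
  shows "cube_avg d (\<lambda>x. (g x - f (restr x S))\<^sup>2)
         \<ge> cube_var (card S) f - 2 * cube_avg d (\<lambda>x. g x * (f (restr x S) - m))"
proof -
  define v where "v x = f (restr x S) - m" for x
  have avg_v: "cube_avg d v = 0"
    unfolding v_def cube_avg_restr[OF S, of "\<lambda>z. f z - m"] by (simp add: cube_avg_diff m_def)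
  have avg_v2: "cube_avg d (\<lambda>x. (v x)\<^sup>2) = cube_var (card S) f"
    unfolding v_def cube_avg_restr[OF S, of "\<lambda>z. (f z - m)\<^sup>2"] by (simp add: cube_var_def m_def)
  have "(v x)\<^sup>2 - 2 * (g x * v x) + 2 * m * v x \<le> (g x - f (restr x S))\<^sup>2" for x
  proof -
    have "(g x - f (restr x S))\<^sup>2 = (g x - m)\<^sup>2 + ((v x)\<^sup>2 - 2 * (g x * v x) + 2 * m * v x)"
      by (simp add: v_def power2_eq_square algebra_simps)
    then show ?thesis by simp
  qed
  then have "cube_avg d (\<lambda>x. (v x)\<^sup>2 - 2 * (g x * v x) + 2 * m * v x)
      \<le> cube_avg d (\<lambda>x. (g x - f (restr x S))\<^sup>2)"
    by (rule cube_avg_mono)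
  moreover have "cube_avg d (\<lambda>x. (v x)\<^sup>2 - 2 * (g x * v x) + 2 * m * v x)
      = cube_var (card S) f - 2 * cube_avg d (\<lambda>x. g x * v x)"
    using avg_v avg_v2 by (simp add: cube_avg_add cube_avg_diff cube_avg_mult_left)
  ultimately show ?thesis by (simp add: v_def)
qed

lemma ensemble_risk_ge:
  fixes f fstar :: "bool list \<Rightarrow> real"
  assumes S: "S \<subseteq> {..<d}" and M: "M \<ge> 0" and Y: "\<forall>i<n. \<bar>snd (D i)\<bar> \<le> M"
    and fstar: "\<And>x. fstar x = f (restr x S)"
  defines "m \<equiv> cube_avg (card S) f"
  shows "risk d (ensemble n B A D \<Theta>) fstar
         \<ge> cube_var (card S) f - 2 * M / B * (\<Sum>b<B. cube_avg d (\<lambda>x.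
               of_bool (path_splits (fst (A D (\<Theta> b))) x \<inter> S \<noteq> {}) * \<bar>f (restr x S) - m\<bar>))"
proof -
  define T where "T b = tree_pred n D (A D (\<Theta> b))" for b
  define E where "E b x = (path_splits (fst (A D (\<Theta> b))) x \<inter> S \<noteq> {})" for b x
  have "cube_avg d (\<lambda>x. T b x * (f (restr x S) - m))
        \<le> M * cube_avg d (\<lambda>x. of_bool (E b x) * \<bar>f (restr x S) - m\<bar>)" for b
  proof (rule cube_avg_mult_centred_le[OF S, of "\<lambda>z. f z - m"])
    show "cube_avg (card S) (\<lambda>z. f z - m) = 0" by (simp add: cube_avg_diff m_def)
    show "\<bar>T b x\<bar> \<le> M" for x unfolding T_def using M Y by (rule abs_tree_pred_le)
    fix x y assume "y \<in> fibre d S x" "\<not> E b x"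
    then have "leaf_path (fst (A D (\<Theta> b))) y = leaf_path (fst (A D (\<Theta> b))) x"
      and "path_splits (fst (A D (\<Theta> b))) y = path_splits (fst (A D (\<Theta> b))) x"
      using leaf_path_path_splits_eq[of S y x "fst (A D (\<Theta> b))"] by (simp_all add: E_def fibre_def)
    then show "\<not> E b y \<and> T b y = T b x"
      using \<open>\<not> E b x\<close> by (simp add: E_def T_def tree_pred_def)
  qed
  then have "(\<Sum>b<B. cube_avg d (\<lambda>x. T b x * (f (restr x S) - m)))
      \<le> M * (\<Sum>b<B. cube_avg d (\<lambda>x. of_bool (E b x) * \<bar>f (restr x S) - m\<bar>))"
    by (simp add: sum_distrib_left sum_mono)
  moreover have "cube_avg d (\<lambda>x. ensemble n B A D \<Theta> x * (f (restr x S) - m))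
      = cube_avg d (\<lambda>x. (\<Sum>b<B. T b x * (f (restr x S) - m)) / B)"
    by (simp add: ensemble_def T_def sum_distrib_right)
  then have "cube_avg d (\<lambda>x. ensemble n B A D \<Theta> x * (f (restr x S) - m))
      = (\<Sum>b<B. cube_avg d (\<lambda>x. T b x * (f (restr x S) - m))) / B"
    by (simp only: cube_avg_divide cube_avg_sum)
  ultimately have "cube_avg d (\<lambda>x. ensemble n B A D \<Theta> x * (f (restr x S) - m))
      \<le> M / B * (\<Sum>b<B. cube_avg d (\<lambda>x. of_bool (E b x) * \<bar>f (restr x S) - m\<bar>))"
    by (simp add: divide_right_mono)
  then show ?thesis
    using cube_avg_sq_diff_restr_ge[OF S, of f "ensemble n B A D \<Theta>"]
    unfolding risk_eq_cube_avg fstar E_def m_def by linarith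
qed

section \<open>Laws of the data and of the seeds\<close>

lemma sets_obs_law: "sets (obs_law d f \<mu>) = sets (count_space UNIV \<Otimes>\<^sub>M borel)"
  by (simp add: obs_law_def)

lemma measurable_add_response:
  fixes \<mu> :: "real measure"
  assumes "sets \<mu> = sets borel"
  shows "(\<lambda>(x, e). (x, f x + e)) \<in> measurable (measure_pmf p \<Otimes>\<^sub>M \<mu>) (count_space UNIV \<Otimes>\<^sub>M borel)"
proof -
  have sets_eq: "sets (measure_pmf p \<Otimes>\<^sub>M \<mu>) = sets (count_space UNIV \<Otimes>\<^sub>M (borel :: real measure))"
    using assms by (intro sets_pair_measure_cong) simp_all
  have [measurable]: "(\<lambda>y. f (fst y)) \<in> borel_measurable (count_space UNIV \<Otimes>\<^sub>M (borel :: real measure))"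
    by (rule measurable_compose[OF measurable_fst]) simp
  show ?thesis
    unfolding measurable_cong_sets[OF sets_eq refl] by measurable
qed

lemma prob_space_obs_law:
  assumes "prob_space \<mu>" and "sets \<mu> = sets borel"
  shows "prob_space (obs_law d f \<mu>)"
  unfolding obs_law_def
  by (intro prob_space.prob_space_distr prob_space_pair prob_space_measure_pmf assms
      measurable_add_response)

lemma prob_space_data_law:
  "prob_space \<mu> \<Longrightarrow> sets \<mu> = sets borel \<Longrightarrow> prob_space (data_law n d f \<mu>)"
  unfolding data_law_def by (intro prob_space_PiM prob_space_obs_law)

lemma prob_space_seed_law: "prob_space \<nu> \<Longrightarrow> prob_space (seed_law B \<nu>)"
  unfolding seed_law_def by (rule prob_space_PiM)

lemma AE_obs_law_abs_response_le:
  assumes \<mu>: "prob_space \<mu>" "sets \<mu> = sets borel"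
    and bounded: "AE e in \<mu>. \<forall>x\<in>cube d. \<bar>f x + e\<bar> \<le> M"
  shows "AE y in obs_law d f \<mu>. \<bar>snd y\<bar> \<le> M"
proof -
  let ?p = "measure_pmf (pmf_of_set (cube d))"
  interpret pair_sigma_finite ?p \<mu>
    using \<mu> by (simp add: pair_sigma_finite_def prob_space_imp_sigma_finite prob_space_measure_pmf)
  have "AE z in ?p \<Otimes>\<^sub>M \<mu>. \<bar>snd ((\<lambda>(x, e). (x, f x + e)) z)\<bar> \<le> M"
  proof (rule AE_pair_measure)
    show "{z \<in> space (?p \<Otimes>\<^sub>M \<mu>). \<bar>snd ((\<lambda>(x, e). (x, f x + e)) z)\<bar> \<le> M} \<in> sets (?p \<Otimes>\<^sub>M \<mu>)"
      using measurable_compose[OF measurable_add_response[OF \<mu>(2)],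
          of "\<lambda>y. \<bar>snd y\<bar> \<le> M" "count_space UNIV"]
      by (simp add: pred_def)
    show "AE x in ?p. AE e in \<mu>. \<bar>snd ((\<lambda>(x, e). (x, f x + e)) (x, e))\<bar> \<le> M"
      unfolding AE_measure_pmf_iff set_pmf_of_set[OF cube_nonempty finite_cube]
    proof
      fix x assume x: "x \<in> cube d"
      show "AE e in \<mu>. \<bar>snd ((\<lambda>(x, e). (x, f x + e)) (x, e))\<bar> \<le> M"
        using bounded by (rule eventually_mono) (use x in simp)
    qed
  qed
  then show ?thesis
    unfolding obs_law_def by (subst AE_distr_iff) (use measurable_add_response[OF \<mu>(2)] in simp_all)
qed

lemma AE_data_law_abs_responses_le:
  assumes "prob_space \<mu>" "sets \<mu> = sets borel"
    and "AE e in \<mu>. \<forall>x\<in>cube d. \<bar>f x + e\<bar> \<le> M"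
  shows "AE D in data_law n d f \<mu>. \<forall>i<n. \<bar>snd (D i)\<bar> \<le> M"
proof -
  have "AE D in data_law n d f \<mu>. \<forall>i\<in>{..<n}. \<bar>snd (D i)\<bar> \<le> M"
    unfolding data_law_def using AE_obs_law_abs_response_le[OF assms]
    by (intro AE_finite_allI AE_PiM_component prob_space_obs_law assms(1,2)) auto
  then show ?thesis by (rule eventually_mono) simp
qed

lemma AE_pair_fst:
  assumes "prob_space N" and "AE x in M. P x"
  shows "AE p in M \<Otimes>\<^sub>M N. P (fst p)"
  by (rule AE_distrD[OF measurable_fst]) (subst prob_space.distr_pair_fst[OF assms(1)], rule assms(2))

lemma measurable_tree_pred:
  "(\<lambda>D. tree_pred n D tw x) \<in> borel_measurable (data_law n d f \<mu>)"
proof -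
  let ?same = "\<lambda>y. leaf_path (fst tw) y = leaf_path (fst tw) x"
  have component: "(\<lambda>D. D i) \<in> measurable (data_law n d f \<mu>) (count_space UNIV \<Otimes>\<^sub>M borel)"
    if "i < n" for i
  proof -
    have "(\<lambda>D. D i) \<in> measurable (data_law n d f \<mu>) (obs_law d f \<mu>)"
      unfolding data_law_def using that by (intro measurable_component_singleton) simp
    then show ?thesis unfolding measurable_cong_sets[OF refl sets_obs_law] .
  qed
  have [measurable]: "(\<lambda>y. ?same (fst y))
      \<in> measurable (count_space UNIV \<Otimes>\<^sub>M (borel :: real measure)) (count_space UNIV)"
    by (rule measurable_compose[OF measurable_fst]) simp
  have "(\<lambda>y. if ?same (fst y) then c * snd y else 0) \<in> borel_measurable (count_space UNIV \<Otimes>\<^sub>M borel)"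
    and "(\<lambda>y. if ?same (fst y) then c else 0)
      \<in> borel_measurable (count_space UNIV \<Otimes>\<^sub>M (borel :: real measure))"
    for c :: real
    by measurable
  then show ?thesis
    unfolding tree_pred_def Let_def sum.inter_filter[OF finite_lessThan]
    by (intro borel_measurable_divide borel_measurable_sum measurable_compose[OF component]) auto
qed

instance stree :: countable
  by countable_datatype

instance multiset :: (countable) countable
proof
  obtain to_nat :: "'a list \<Rightarrow> nat" where "inj to_nat"
    using ex_inj by blast
  then show "\<exists>to_nat :: 'a multiset \<Rightarrow> nat. inj to_nat"
    using inj_compose surj_imp_inj_inv[OF surj_mset] by blast
qed

lemma measurable_seed_component:
  "b < B \<Longrightarrow> (\<lambda>p. (fst p, snd p b)) \<in> measurable (M \<Otimes>\<^sub>M seed_law B \<nu>) (M \<Otimes>\<^sub>M \<nu>)"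
  unfolding seed_law_def
  by (intro measurable_Pair measurable_compose[OF measurable_snd measurable_component_singleton])
     (simp_all add: measurable_fst)

lemma measurable_ensemble_risk:
  assumes A: "(\<lambda>(D, \<theta>). A D \<theta>) \<in> measurable (data_law n d f \<mu> \<Otimes>\<^sub>M \<nu>) (count_space UNIV)"
  shows "(\<lambda>p. risk d (ensemble n B A (fst p) (snd p)) g)
    \<in> borel_measurable (data_law n d f \<mu> \<Otimes>\<^sub>M seed_law B \<nu>)"
proof -
  have "(\<lambda>p. tree_pred n (fst p) (A (fst p) (snd p b)) x)
      \<in> borel_measurable (data_law n d f \<mu> \<Otimes>\<^sub>M seed_law B \<nu>)"
    if "b < B" for b x
  proof (rule measurable_compose_countable[where f = "\<lambda>tw p. tree_pred n (fst p) tw x"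
        and g = "\<lambda>p. A (fst p) (snd p b)"])
    show "(\<lambda>p. tree_pred n (fst p) tw x)
        \<in> borel_measurable (data_law n d f \<mu> \<Otimes>\<^sub>M seed_law B \<nu>)" for tw
      by (rule measurable_compose[OF measurable_fst measurable_tree_pred])
    show "(\<lambda>p. A (fst p) (snd p b))
        \<in> measurable (data_law n d f \<mu> \<Otimes>\<^sub>M seed_law B \<nu>) (count_space UNIV)"
      using measurable_compose[OF measurable_seed_component[OF that] A] by simp
  qed
  then show ?thesis
    unfolding risk_eq_cube_avg cube_avg_def ensemble_def
    by (intro borel_measurable_divide borel_measurable_sum borel_measurable_power borel_measurable_diff)
      simp_all
qed

lemma measure_seed_component:
  assumes \<nu>: "prob_space \<nu>" and b: "b < B"
    and E: "E \<in> sets (M \<Otimes>\<^sub>M \<nu>)"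
  shows "measure (M \<Otimes>\<^sub>M seed_law B \<nu>) ((\<lambda>p. (fst p, snd p b)) -` E \<inter> space (M \<Otimes>\<^sub>M seed_law B \<nu>))
       = measure (M \<Otimes>\<^sub>M \<nu>) E"
proof -
  have measurable_component: "(\<lambda>\<Theta>. \<Theta> b) \<in> measurable (seed_law B \<nu>) \<nu>"
    unfolding seed_law_def using b by (intro measurable_component_singleton) simp
  have component: "distr (seed_law B \<nu>) \<nu> (\<lambda>\<Theta>. \<Theta> b) = \<nu>"
    unfolding seed_law_def by (rule distr_PiM_component) (simp_all add: \<nu> b)
  have "distr M M (\<lambda>x. x) \<Otimes>\<^sub>M distr (seed_law B \<nu>) \<nu> (\<lambda>\<Theta>. \<Theta> b)
      = distr (M \<Otimes>\<^sub>M seed_law B \<nu>) (M \<Otimes>\<^sub>M \<nu>) (\<lambda>(x, \<Theta>). (x, \<Theta> b))"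
    using measurable_component
    by (intro pair_measure_distr) (simp_all add: component \<nu> prob_space_imp_sigma_finite)
  then have "distr (M \<Otimes>\<^sub>M seed_law B \<nu>) (M \<Otimes>\<^sub>M \<nu>) (\<lambda>p. (fst p, snd p b)) = M \<Otimes>\<^sub>M \<nu>"
    by (simp add: component case_prod_beta')
  then show ?thesis
    using measure_distr[OF measurable_seed_component[OF b] E] by simp
qed

lemma integrable_cube_avg:
  "(\<And>x. x \<in> cube d \<Longrightarrow> integrable M (F x)) \<Longrightarrow> integrable M (\<lambda>\<omega>. cube_avg d (\<lambda>x. F x \<omega>))"
  by (auto simp: cube_avg_def)

lemma integral_cube_avg:
  "(\<And>x. x \<in> cube d \<Longrightarrow> integrable M (F x))
   \<Longrightarrow> integral\<^sup>L M (\<lambda>\<omega>. cube_avg d (\<lambda>x. F x \<omega>)) = cube_avg d (\<lambda>x. integral\<^sup>L M (F x))"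
  unfolding cube_avg_def by (simp add: Bochner_Integration.integral_sum)

lemma (in prob_space) expectation_ge_of_AE_ge_cube_avg_indicator:
  fixes R :: "'a \<Rightarrow> real" and E :: "'b \<Rightarrow> bool list \<Rightarrow> 'a set"
    and w :: "bool list \<Rightarrow> real" and V c \<delta> :: real
  assumes R: "integrable M R"
    and E: "\<And>b x. b \<in> I \<Longrightarrow> E b x \<in> events"
    and prob_E: "\<And>b x. b \<in> I \<Longrightarrow> x \<in> cube d \<Longrightarrow> prob (E b x) \<le> \<delta>"
    and lower: "AE \<omega> in M. V - c * (\<Sum>b\<in>I. cube_avg d (\<lambda>x. indicator (E b x) \<omega> * w x)) \<le> R \<omega>"
    and c: "c \<ge> 0" and w: "\<And>x. w x \<ge> 0"
  shows "V - c * (card I * \<delta> * cube_avg d w) \<le> expectation R"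
proof -
  have integrable_indicator: "integrable M (\<lambda>\<omega>. indicator (E b x) \<omega> * w x)" if "b \<in> I" for b x
    using E[OF that] by (simp add: emeasure_finite less_top[symmetric])
  then have integrable: "integrable M (\<lambda>\<omega>. cube_avg d (\<lambda>x. indicator (E b x) \<omega> * w x))" if "b \<in> I" for b
    using that by (intro integrable_cube_avg)
  have expectation: "expectation (\<lambda>\<omega>. cube_avg d (\<lambda>x. indicator (E b x) \<omega> * w x))
      = cube_avg d (\<lambda>x. prob (E b x) * w x)" if "b \<in> I" for b
    using that integrable_indicator E by (simp add: integral_cube_avg)
  have "(\<Sum>b\<in>I. cube_avg d (\<lambda>x. prob (E b x) * w x)) \<le> (\<Sum>b\<in>I. cube_avg d (\<lambda>x. \<delta> * w x))"
    using prob_E w by (intro sum_mono cube_avg_mono mult_right_mono) auto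
  then have "V - c * (card I * \<delta> * cube_avg d w)
      \<le> expectation (\<lambda>\<omega>. V - c * (\<Sum>b\<in>I. cube_avg d (\<lambda>x. indicator (E b x) \<omega> * w x)))"
    using integrable expectation c
    by (simp add: Bochner_Integration.integral_sum prob_space cube_avg_mult_left mult_left_mono)
  also have "\<dots> \<le> expectation R"
    using integrable lower by (intro integral_mono_AE R) auto
  finally show ?thesis .
qed

section \<open>The lower bound in expectation\<close>

locale tree_ensemble_model =
  fixes d n B :: nat and M :: real and f0 fstar :: "bool list \<Rightarrow> real" and S :: "nat set"
    and \<mu> :: "real measure" and \<nu> :: "'c measure"
    and A :: "(nat \<Rightarrow> bool list \<times> real) \<Rightarrow> 'c \<Rightarrow> stree \<times> nat multiset"
  assumes B_pos: "B > 0" and S_subset: "S \<subseteq> {..<d}"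
    and fstar_eq: "\<And>x. fstar x = f0 (restr x S)"
    and noise: "prob_space \<mu>" and sets_noise: "sets \<mu> = sets borel"
    and responses_bounded: "AE e in \<mu>. \<forall>x\<in>cube d. \<bar>fstar x + e\<bar> \<le> M"
    and seeds: "prob_space \<nu>"
    and measurable_A: "(\<lambda>(D, \<theta>). A D \<theta>) \<in> measurable (data_law n d fstar \<mu> \<Otimes>\<^sub>M \<nu>) (count_space UNIV)"
begin

abbreviation "sample_law \<equiv> data_law n d fstar \<mu> \<Otimes>\<^sub>M seed_law B \<nu>"
abbreviation "tree_law \<equiv> data_law n d fstar \<mu> \<Otimes>\<^sub>M \<nu>"

definition relevant_split_event :: "bool list \<Rightarrow> ((nat \<Rightarrow> bool list \<times> real) \<times> 'c) set" where
  "relevant_split_event x =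
     {q \<in> space tree_law. path_splits (fst (A (fst q) (snd q))) x \<inter> S \<noteq> {}}"

definition seed_split_event :: "nat \<Rightarrow> bool list \<Rightarrow> ((nat \<Rightarrow> bool list \<times> real) \<times> (nat \<Rightarrow> 'c)) set" where
  "seed_split_event b x = (\<lambda>p. (fst p, snd p b)) -` relevant_split_event x \<inter> space sample_law"

lemma prob_space_data: "prob_space (data_law n d fstar \<mu>)"
  using noise sets_noise by (rule prob_space_data_law)

sublocale sample: prob_space sample_law
  using prob_space_data seeds by (intro prob_space_pair prob_space_seed_law)

lemma M_nonneg: "M \<ge> 0"
proof -
  have "AE e in \<mu>. M \<ge> 0"
    using responses_bounded
    by (rule eventually_mono) (meson abs_ge_zero cube_nonempty ex_in_conv order_trans)
  then show ?thesis
    using prob_space.AE_const[OF noise] by simp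
qed

lemma AE_sample_responses_bounded: "AE p in sample_law. \<forall>i<n. \<bar>snd (fst p i)\<bar> \<le> M"
  using seeds AE_data_law_abs_responses_le[OF noise sets_noise responses_bounded]
  by (intro AE_pair_fst prob_space_seed_law)

lemma relevant_split_event_sets: "relevant_split_event x \<in> sets tree_law"
proof -
  have "relevant_split_event x
      = (\<lambda>(D, \<theta>). A D \<theta>) -` {tw. path_splits (fst tw) x \<inter> S \<noteq> {}} \<inter> space tree_law"
    by (auto simp: relevant_split_event_def)
  also have "\<dots> \<in> sets tree_law"
    by (rule measurable_sets[OF measurable_A]) simp
  finally show ?thesis .
qed

lemma seed_split_event_sets: "b < B \<Longrightarrow> seed_split_event b x \<in> sample.events"
  unfolding seed_split_event_def
  by (rule measurable_sets[OF measurable_seed_component relevant_split_event_sets])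

lemma prob_seed_split_event:
  "b < B \<Longrightarrow> sample.prob (seed_split_event b x) = measure tree_law (relevant_split_event x)"
  unfolding seed_split_event_def
  by (rule measure_seed_component[OF seeds _ relevant_split_event_sets])

lemma AE_ensemble_risk_ge:
  "AE p in sample_law. cube_var (card S) f0 - 2 * M / B * (\<Sum>b<B. cube_avg d (\<lambda>x.
       indicator (seed_split_event b x) p * \<bar>f0 (restr x S) - cube_avg (card S) f0\<bar>))
     \<le> risk d (ensemble n B A (fst p) (snd p)) fstar"
  using AE_sample_responses_bounded AE_space
proof eventually_elim
  case (elim p)
  have "(indicator (seed_split_event b x) p :: real)
      = of_bool (path_splits (fst (A (fst p) (snd p b))) x \<inter> S \<noteq> {})" if "b \<in> {..<B}" for b x
    using measurable_space[OF measurable_seed_component elim(2)] that elim(2)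
    by (simp add: seed_split_event_def relevant_split_event_def)
  then have "(\<Sum>b<B. cube_avg d (\<lambda>x.
        indicator (seed_split_event b x) p * \<bar>f0 (restr x S) - cube_avg (card S) f0\<bar>))
      = (\<Sum>b<B. cube_avg d (\<lambda>x. of_bool (path_splits (fst (A (fst p) (snd p b))) x \<inter> S \<noteq> {})
          * \<bar>f0 (restr x S) - cube_avg (card S) f0\<bar>))"
    by (intro sum.cong) simp_all
  then show ?case
    using ensemble_risk_ge[where D = "fst p" and \<Theta> = "snd p" and f = f0 and fstar = fstar,
        OF S_subset M_nonneg elim(1) fstar_eq]
    by simp
qed

lemma integrable_ensemble_risk:
  "integrable sample_law (\<lambda>p. risk d (ensemble n B A (fst p) (snd p)) fstar)"
proof (rule sample.integrable_const_bound)
  show "AE p in sample_law. norm (risk d (ensemble n B A (fst p) (snd p)) fstar)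
      \<le> cube_avg d (\<lambda>x. (M + \<bar>fstar x\<bar>)\<^sup>2)"
    using AE_sample_responses_bounded
    by (rule eventually_mono) (simp add: abs_risk_le abs_ensemble_le M_nonneg)
  show "(\<lambda>p. risk d (ensemble n B A (fst p) (snd p)) fstar) \<in> borel_measurable sample_law"
    by (rule measurable_ensemble_risk[OF measurable_A])
qed

theorem expected_ensemble_risk_ge:
  "(1 - 2 * M / sqrt (cube_var (card S) f0)
        * Max ((\<lambda>x. measure tree_law (relevant_split_event x)) ` cube d)) * cube_var (card S) f0
   \<le> sample.expectation (\<lambda>p. risk d (ensemble n B A (fst p) (snd p)) fstar)"
proof -
  define V where "V = cube_var (card S) f0"
  define \<delta> where "\<delta> = Max ((\<lambda>x. measure tree_law (relevant_split_event x)) ` cube d)"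
  define v where "v x = \<bar>f0 (restr x S) - cube_avg (card S) f0\<bar>" for x
  have "V - 2 * M / B * (card {..<B} * \<delta> * cube_avg d v)
      \<le> sample.expectation (\<lambda>p. risk d (ensemble n B A (fst p) (snd p)) fstar)"
    using AE_ensemble_risk_ge unfolding V_def v_def
    by (rule sample.expectation_ge_of_AE_ge_cube_avg_indicator[rotated 3])
      (auto simp: M_nonneg integrable_ensemble_risk seed_split_event_sets prob_seed_split_event \<delta>_def)
  moreover have "2 * M / B * (card {..<B} * \<delta> * cube_avg d v) \<le> 2 * M * \<delta> * sqrt V"
  proof -
    have "\<delta> \<ge> 0"
      unfolding \<delta>_def by (simp add: Max_ge_iff ex_in_conv)
    then have "2 * M * \<delta> * cube_avg d v \<le> 2 * M * \<delta> * sqrt V"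
      unfolding V_def v_def using M_nonneg cube_avg_abs_centred_restr_le[OF S_subset]
      by (intro mult_left_mono) simp_all
    then show ?thesis using B_pos by simp
  qed
  moreover have "(1 - 2 * M / sqrt V * \<delta>) * V = V - 2 * M * \<delta> * sqrt V"
  proof -
    have "(1 - 2 * M / sqrt V * \<delta>) * V = V - 2 * M * \<delta> * (V / sqrt V)"
      by (simp add: algebra_simps)
    also have "V / sqrt V = sqrt V"
      unfolding V_def by (rule real_div_sqrt[OF cube_var_nonneg])
    finally show ?thesis .
  qed
  ultimately show ?thesis
    unfolding V_def[symmetric] \<delta>_def[symmetric] by linarith
qed

end

theorem lemma4:
  fixes d s n B :: nat
    and M :: real
    and f0 fstar :: "bool list \<Rightarrow> real"
    and S :: "nat set"
    and \<mu> :: "real measure"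
    and \<nu> :: "'c measure"
    and A :: "(nat \<Rightarrow> bool list \<times> real) \<Rightarrow> 'c \<Rightarrow> stree \<times> nat multiset"
  assumes "d > 0" and "s > 0" and "n > 0" and "B > 0"
    and "S \<subseteq> {..<d}" and "card S = s"
    and "\<And>x. fstar x = f0 (restr x S)"
    and "prob_space \<mu>" and "sets \<mu> = sets borel"
    and "integrable \<mu> (\<lambda>e. e)" and "(\<integral>e. e \<partial>\<mu>) = 0"
    and "AE e in \<mu>. \<forall>x\<in>cube d. \<bar>fstar x + e\<bar> \<le> M"
    and "prob_space \<nu>"
    and "\<And>D \<theta>. valid_tree d (fst (A D \<theta>))"
    and "(\<lambda>(D, \<theta>). A D \<theta>) \<in> measurable (data_law n d fstar \<mu> \<Otimes>\<^sub>M \<nu>) (count_space UNIV)"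
  shows
    "(\<integral>p. risk d (ensemble n B A (fst p) (snd p)) fstar
         \<partial>(data_law n d fstar \<mu> \<Otimes>\<^sub>M seed_law B \<nu>))
     \<ge> (1 - (2 * M / sqrt (measure_pmf.variance (pmf_of_set (cube s)) f0))
            * Max ((\<lambda>x. measure (data_law n d fstar \<mu> \<Otimes>\<^sub>M \<nu>)
                          {p \<in> space (data_law n d fstar \<mu> \<Otimes>\<^sub>M \<nu>).
                             path_splits (fst (A (fst p) (snd p))) x \<inter> S \<noteq> {}}) ` cube d))
       * measure_pmf.variance (pmf_of_set (cube s)) f0"
proof -
  interpret tree_ensemble_model d n B M f0 fstar S \<mu> \<nu> A
    by (rule tree_ensemble_model.intro) (rule assms)+
  show ?thesis
    using expected_ensemble_risk_ge
    unfolding relevant_split_event_def variance_pmf_of_cube assms(6) .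
qed

end
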